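(* In $\mathrm{TSym}$, for every planar tree $t$ of positive degree, $$\Delta_+(M_t)=\sum_{i\in\mathrm{GD}(t)}M_{{}^it}\otimes M_{t^i}.$$
   Context: A planar tree has linearly ordered children at each node, each node being a leaf or having $\ge2$ children (internal node); $\deg t$ = number of leaves minus one, $\mathrm{ideg}(t)$ = number of internal nodes, leaves numbered left to right. For $0\le i\le\deg t$, with $P$ the path from the root to leaf $i+1$: ${}^it$ is obtained by deleting, at each internal node on $P$, the children strictly to the right of the child on $P$ (with their subtrees), then contracting nodes with exactly one child; $t^i$ likewise with the children strictly to the left. The splitting is allowable if $\mathrm{ideg}({}^it)+\mathrm{ideg}(t^i)=\mathrm{ideg}(t)$. $\mathrm{TSym}$ has basis $\{F_t\}$ over planar trees and coproduct $\Delta(F_t)=\sum F_{{}^it}\otimes F_{t^i}$ over $0\le i\le\deg t$ with allowable splitting; $\Delta_+(x)=\Delta(x)-x\otimes1-1\otimes x$ with $1$ the one-leaf tree. $s/r$ identifies the root of $s$ with the leftmost leaf of $r$; $\mathrm{GD}(t)=\{i\in\{1,\dots,\deg t-1\}: t=s/r \text{ for some } s,r,\ \deg s=i\}$. Planar Tamari order: if an internal node $x$ has children $c_1,\dots,c_{a-1},y$ ($a\ge2$) with $y$ internal having children $d_1,\dots,d_{b+1}$ ($b\ge1$), the left rotation at $x$ replaces the subtree at $x$ by a node with children $z,d_2,\dots,d_{b+1}$, where $z$ is a new node with children $c_1,\dots,c_{a-1},d_1$; $\le_{PT}$ is the reflexive–transitive closure of "$t$ is a left rotation of $s$". The monomial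 basis is defined by $F_s=\sum_{t\ge_{PT}s}M_t$. *)

theory Defs
  imports Main
begin

datatype ptree = Leaf | Node "ptree list"

fun valid :: "ptree \<Rightarrow> bool" where
  "valid Leaf = True"
| "valid (Node cs) = (2 \<le> length cs \<and> (\<forall>c\<in>set cs. valid c))"

fun nleaves :: "ptree \<Rightarrow> nat" where
  "nleaves Leaf = 1"
| "nleaves (Node cs) = sum_list (map nleaves cs)"

definition deg :: "ptree \<Rightarrow> nat" where
  "deg t = nleaves t - 1"

fun ideg :: "ptree \<Rightarrow> nat" where
  "ideg Leaf = 0"
| "ideg (Node cs) = 1 + sum_list (map ideg cs)"

fun mk :: "ptree list \<Rightarrow> ptree" where
  "mk [c] = c"
| "mk cs = Node cs"

text \<open>Leaves are indexed from 0; leaf index i is leaf number i+1 of the paper.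
  lcut i t is the left part (leaves 0..i kept), rcut i t the right part.\<close>
fun lcut :: "nat \<Rightarrow> ptree \<Rightarrow> ptree"
and lcs :: "nat \<Rightarrow> ptree list \<Rightarrow> ptree list" where
  "lcut i Leaf = Leaf"
| "lcut i (Node cs) = mk (lcs i cs)"
| "lcs i [] = []"
| "lcs i (c # cs) = (if i < nleaves c then [lcut i c] else c # lcs (i - nleaves c) cs)"

fun rcut :: "nat \<Rightarrow> ptree \<Rightarrow> ptree"
and rcs :: "nat \<Rightarrow> ptree list \<Rightarrow> ptree list" where
  "rcut i Leaf = Leaf"
| "rcut i (Node cs) = mk (rcs i cs)"
| "rcs i [] = []"
| "rcs i (c # cs) = (if i < nleaves c then rcut i c # cs else rcs (i - nleaves c) cs)"

definition allowable :: "nat \<Rightarrow> ptree \<Rightarrow> bool" where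
  "allowable i t \<longleftrightarrow> ideg (lcut i t) + ideg (rcut i t) = ideg t"

text \<open>Grafting s/r: the root of s is identified with the leftmost leaf of r.\<close>
fun graft :: "ptree \<Rightarrow> ptree \<Rightarrow> ptree" where
  "graft s Leaf = s"
| "graft s (Node []) = Node []"
| "graft s (Node (c # cs)) = Node (graft s c # cs)"

definition GD :: "ptree \<Rightarrow> nat set" where
  "GD t = {i. 1 \<le> i \<and> i \<le> deg t - 1 \<and>
     (\<exists>s r. valid s \<and> valid r \<and> t = graft s r \<and> deg s = i)}"

text \<open>Left rotation (anywhere in the tree): rot s t means t is a left rotation of s.\<close>
inductive rot :: "ptree \<Rightarrow> ptree \<Rightarrow> bool" where
  here: "cs \<noteq> [] \<Longrightarrow> ds \<noteq> [] \<Longrightarrow>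
     rot (Node (cs @ [Node (d1 # ds)])) (Node (Node (cs @ [d1]) # ds))"
| inside: "rot c c' \<Longrightarrow> rot (Node (xs @ c # ys)) (Node (xs @ c' # ys))"

definition tamari_le :: "ptree \<Rightarrow> ptree \<Rightarrow> bool" where
  "tamari_le s t \<longleftrightarrow> rot\<^sup>*\<^sup>* s t"

text \<open>Elements of TSym: coefficient functions on trees (finitely supported);
  elements of TSym \<otimes> TSym: coefficient functions on pairs of trees.\<close>
definition Fb :: "ptree \<Rightarrow> ptree \<Rightarrow> 'a::comm_ring_1" where
  "Fb t = (\<lambda>u. if u = t then 1 else 0)"

definition tensor :: "(ptree \<Rightarrow> 'a::comm_ring_1) \<Rightarrow> (ptree \<Rightarrow> 'a) \<Rightarrow> ptree \<times> ptree \<Rightarrow> 'a" where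
  "tensor x y = (\<lambda>(u, v). x u * y v)"

definition DeltaF :: "ptree \<Rightarrow> ptree \<times> ptree \<Rightarrow> 'a::comm_ring_1" where
  "DeltaF t = (\<lambda>p. \<Sum>i\<in>{i. i \<le> deg t \<and> allowable i t}.
                 if p = (lcut i t, rcut i t) then 1 else 0)"

definition Delta :: "(ptree \<Rightarrow> 'a::comm_ring_1) \<Rightarrow> ptree \<times> ptree \<Rightarrow> 'a" where
  "Delta x = (\<lambda>p. \<Sum>t\<in>{t. x t \<noteq> 0}. x t * DeltaF t p)"

definition Delta_plus :: "(ptree \<Rightarrow> 'a::comm_ring_1) \<Rightarrow> ptree \<times> ptree \<Rightarrow> 'a" where
  "Delta_plus x = (\<lambda>p. Delta x p - tensor x (Fb Leaf) p - tensor (Fb Leaf) x p)"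

end

theory Submission
  imports Defs
begin

text \<open>Since \<open>F\<^sub>s = \<Sum>\<^sub>t\<^sub>\<ge>\<^sub>s M\<^sub>t\<close>, summing \<open>\<Delta>(M\<^sub>t)\<close> over the Tamari upper set of \<open>s\<close>
  gives \<open>\<Delta>(F\<^sub>s)\<close>. On the other hand, a graft \<open>x/y\<close> lies above \<open>s\<close> iff the splitting of \<open>s\<close>
  at \<open>deg x\<close> is allowable and its two halves lie below \<open>x\<close> and \<open>y\<close>; hence summing
  \<open>\<Sum>\<^sub>x\<^sub>/\<^sub>y\<^sub>=\<^sub>t M\<^sub>x \<otimes> M\<^sub>y\<close> over the same upper set gives \<open>\<Sum> F \<otimes> F = \<Delta>(F\<^sub>s)\<close> as well.
  The Tamari order is a partial order with finite upper sets, so Moebius inversion yields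
  \<open>\<Delta>(M\<^sub>t) = \<Sum>\<^sub>x\<^sub>/\<^sub>y\<^sub>=\<^sub>t M\<^sub>x \<otimes> M\<^sub>y\<close>. The decompositions \<open>t = x/y\<close> are \<open>t/1\<close>, \<open>1/t\<close> and one
  for each \<open>i \<in> GD(t)\<close>.\<close>

abbreviation nleaves_list :: "ptree list \<Rightarrow> nat" where
  "nleaves_list cs \<equiv> sum_list (map nleaves cs)"

abbreviation tamari_upset :: "ptree \<Rightarrow> ptree set" where
  "tamari_upset s \<equiv> {t. tamari_le s t}"

section \<open>Leaves and cuts\<close>

lemma mk_eq: "mk cs = (if length cs = 1 then hd cs else Node cs)"
  by (cases cs rule: mk.cases) auto

lemma nleaves_mk [simp]: "nleaves (mk cs) = nleaves_list cs"
  by (cases cs rule: mk.cases) auto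

lemma valid_mk: "cs \<noteq> [] \<Longrightarrow> \<forall>c\<in>set cs. valid c \<Longrightarrow> valid (mk cs)"
  by (cases cs rule: mk.cases) auto

lemma lcs_append:
  "lcs i (xs @ ys) = (if i < nleaves_list xs then lcs i xs else xs @ lcs (i - nleaves_list xs) ys)"
  by (induction xs arbitrary: i) (auto simp: diff_diff_add)

lemma rcs_append:
  "rcs i (xs @ ys) = (if i < nleaves_list xs then rcs i xs @ ys else rcs (i - nleaves_list xs) ys)"
  by (induction xs arbitrary: i) (auto simp: diff_diff_add)

lemma lcs_nonempty: "cs \<noteq> [] \<Longrightarrow> lcs i cs \<noteq> []"
  by (cases cs) auto

lemma rcs_nonempty: "i < nleaves_list cs \<Longrightarrow> rcs i cs \<noteq> []"
  by (induction cs arbitrary: i) auto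

lemma lcs_beyond: "nleaves_list cs \<le> i \<Longrightarrow> lcs i cs = cs"
  by (induction cs arbitrary: i) auto

lemma rcs_beyond: "nleaves_list cs \<le> i \<Longrightarrow> rcs i cs = []"
  by (induction cs arbitrary: i) auto

lemma nleaves_lcut:
  "i < nleaves t \<Longrightarrow> nleaves (lcut i t) = i + 1"
  "i < nleaves_list cs \<Longrightarrow> nleaves_list (lcs i cs) = i + 1"
  by (induction i t and i cs rule: lcut_lcs.induct) auto

lemma valid_lcut:
  "valid t \<Longrightarrow> valid (lcut i t)"
  "\<forall>c\<in>set cs. valid c \<Longrightarrow> \<forall>c\<in>set (lcs i cs). valid c"
  by (induction i t and i cs rule: lcut_lcs.induct) (auto intro!: valid_mk lcs_nonempty)

lemma valid_rcut:
  "valid t \<Longrightarrow> i < nleaves t \<Longrightarrow> valid (rcut i t)"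
  "\<forall>c\<in>set cs. valid c \<Longrightarrow> \<forall>c\<in>set (rcs i cs). valid c"
  by (induction i t and i cs rule: rcut_rcs.induct) (auto intro!: valid_mk rcs_nonempty)

lemma length_le_nleaves_list: "\<forall>c\<in>set cs. 1 \<le> nleaves c \<Longrightarrow> length cs \<le> nleaves_list cs"
  by (induction cs) auto

lemma nleaves_pos: "valid t \<Longrightarrow> 1 \<le> nleaves t"
proof (induction t)
  case (Node cs)
  then have "length cs \<le> nleaves_list cs"
    by (intro length_le_nleaves_list) auto
  with Node show ?case by auto
qed simp

lemma valid_nleaves_eq_1: "valid t \<Longrightarrow> nleaves t = 1 \<Longrightarrow> t = Leaf"
proof (cases t)
  case (Node cs)
  assume "valid t" "nleaves t = 1"
  with Node length_le_nleaves_list[of cs] nleaves_pos show ?thesis by fastforce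
qed simp

lemma le_deg_imp_less_nleaves: "valid s \<Longrightarrow> j \<le> deg s \<Longrightarrow> j < nleaves s"
  using nleaves_pos[of s] unfolding deg_def by linarith

section \<open>The Tamari order\<close>

lemma rot_nleaves: "rot s t \<Longrightarrow> nleaves s = nleaves t"
  by (induction rule: rot.induct) auto

lemma rot_ideg: "rot s t \<Longrightarrow> ideg s = ideg t"
  by (induction rule: rot.induct) auto

lemma rot_valid: "rot s t \<Longrightarrow> valid s \<Longrightarrow> valid t"
  by (induction rule: rot.induct) auto

lemma rtranclp_rot_valid: "rot\<^sup>*\<^sup>* s t \<Longrightarrow> valid s \<Longrightarrow> valid t"
  by (induction rule: rtranclp_induct) (auto intro: rot_valid)

lemma rtranclp_rot_nleaves: "rot\<^sup>*\<^sup>* s t \<Longrightarrow> nleaves s = nleaves t"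
  by (induction rule: rtranclp_induct) (auto dest: rot_nleaves)

lemma rtranclp_rot_ideg: "rot\<^sup>*\<^sup>* s t \<Longrightarrow> ideg s = ideg t"
  by (induction rule: rtranclp_induct) (auto dest: rot_ideg)

text \<open>The sum, over all internal nodes, of the number of leaves below the first child. A left
  rotation enlarges the first child of the rotated node and leaves all other first children as
  they are, so this potential strictly increases; hence the Tamari order is antisymmetric.\<close>

fun left_weight :: "ptree \<Rightarrow> nat" where
  "left_weight Leaf = 0"
| "left_weight (Node []) = 0"
| "left_weight (Node (c # cs)) = nleaves c + sum_list (map left_weight (c # cs))"

lemma rot_left_weight_less: "rot s t \<Longrightarrow> valid s \<Longrightarrow> left_weight s < left_weight t"
proof (induction rule: rot.induct)
  case (here cs ds d1)
  then obtain c cs' where "cs = c # cs'" "1 \<le> nleaves c"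
    using nleaves_pos by (cases cs) auto
  then show ?case by simp
next
  case (inside c c' xs ys)
  then have "left_weight c < left_weight c'" "nleaves c = nleaves c'"
    using rot_nleaves by auto
  then show ?case by (cases xs) auto
qed

lemma tranclp_rot_left_weight_less: "rot\<^sup>+\<^sup>+ s t \<Longrightarrow> valid s \<Longrightarrow> left_weight s < left_weight t"
proof (induction rule: tranclp_induct)
  case (step y z)
  then show ?case
    using rot_left_weight_less[of y z] rtranclp_rot_valid[OF tranclp_into_rtranclp] by fastforce
qed (rule rot_left_weight_less)

lemma tamari_le_refl [simp]: "tamari_le s s"
  unfolding tamari_le_def by simp

lemma tamari_le_trans: "tamari_le s t \<Longrightarrow> tamari_le t u \<Longrightarrow> tamari_le s u"
  unfolding tamari_le_def by simp

lemma tamari_le_antisym: "valid s \<Longrightarrow> tamari_le s t \<Longrightarrow> tamari_le t s \<Longrightarrow> s = t"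
  unfolding tamari_le_def
  by (metis rtranclpD rtranclp_rot_valid tranclp_rot_left_weight_less less_asym)

lemma tamari_le_valid: "valid s \<Longrightarrow> tamari_le s t \<Longrightarrow> valid t"
  unfolding tamari_le_def by (rule rtranclp_rot_valid)

lemma tamari_le_nleaves: "tamari_le s t \<Longrightarrow> nleaves t = nleaves s"
  unfolding tamari_le_def by (simp add: rtranclp_rot_nleaves)

lemma tamari_upset_Leaf: "tamari_upset Leaf = {Leaf}"
proof -
  have "rot\<^sup>*\<^sup>* Leaf t \<Longrightarrow> t = Leaf" for t
    by (induction rule: rtranclp_induct) (auto elim: rot.cases)
  then show ?thesis unfolding tamari_le_def by auto
qed

lemma nleaves_child_le:
  "c \<in> set cs \<Longrightarrow> \<forall>c\<in>set cs. 1 \<le> nleaves c \<Longrightarrow> nleaves c + length cs \<le> nleaves_list cs + 1"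
proof (induction cs)
  case (Cons a cs)
  then show ?case using length_le_nleaves_list[of cs] by auto
qed simp

lemma finite_valid_nleaves_le: "finite {t. valid t \<and> nleaves t \<le> n}"
proof (induction n)
  case 0
  have "{t. valid t \<and> nleaves t \<le> 0} = {}" by (auto dest: nleaves_pos)
  then show ?case by (metis finite.emptyI)
next
  case (Suc n)
  let ?A = "{t. valid t \<and> nleaves t \<le> n}"
  have "{t. valid t \<and> nleaves t \<le> Suc n} \<subseteq>
      insert Leaf (Node ` {cs. set cs \<subseteq> ?A \<and> length cs \<le> Suc n})"
  proof
    fix t assume t: "t \<in> {t. valid t \<and> nleaves t \<le> Suc n}"
    show "t \<in> insert Leaf (Node ` {cs. set cs \<subseteq> ?A \<and> length cs \<le> Suc n})"
    proof (cases t)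
      case (Node cs)
      then have pos: "\<forall>c\<in>set cs. 1 \<le> nleaves c" and two: "2 \<le> length cs"
        using t nleaves_pos by auto
      have "set cs \<subseteq> ?A"
        using t Node nleaves_child_le[OF _ pos] two by fastforce
      moreover have "length cs \<le> Suc n"
        using t Node length_le_nleaves_list[OF pos] by simp
      ultimately show ?thesis using Node by blast
    qed simp
  qed
  moreover have "finite (insert Leaf (Node ` {cs. set cs \<subseteq> ?A \<and> length cs \<le> Suc n}))"
    using finite_lists_length_le[OF Suc] by auto
  ultimately show ?case by (rule finite_subset)
qed

lemma finite_tamari_upset: "valid s \<Longrightarrow> finite (tamari_upset s)"
  by (rule finite_subset[OF _ finite_valid_nleaves_le[of "nleaves s"]])
     (auto dest: tamari_le_valid tamari_le_nleaves)

lemma tamari_upset_induct [consumes 1, case_names step]: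
  assumes "valid t"
    and step: "\<And>t. valid t \<Longrightarrow> (\<And>u. tamari_le t u \<Longrightarrow> u \<noteq> t \<Longrightarrow> P u) \<Longrightarrow> P t"
  shows "P t"
  using assms(1)
proof (induction "card (tamari_upset t)" arbitrary: t rule: less_induct)
  case less
  show ?case
  proof (rule step[OF less.prems])
    fix u assume u: "tamari_le t u" "u \<noteq> t"
    have "t \<notin> tamari_upset u" using u tamari_le_antisym[OF less.prems] by auto
    moreover have "tamari_upset u \<subseteq> tamari_upset t" using u tamari_le_trans by blast
    ultimately have "tamari_upset u \<subset> tamari_upset t" by auto
    then have "card (tamari_upset u) < card (tamari_upset t)"
      by (rule psubset_card_mono[OF finite_tamari_upset[OF less.prems]])
    then show "P u" using less.hyps tamari_le_valid[OF less.prems u(1)] by blast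
  qed
qed

lemma zero_if_tamari_upset_sums_zero:
  fixes G :: "ptree \<Rightarrow> 'a::comm_ring_1"
  assumes sums_zero: "\<And>s. valid s \<Longrightarrow> (\<Sum>t\<in>tamari_upset s. G t) = 0" and "valid t"
  shows "G t = 0"
  using assms(2)
proof (induction rule: tamari_upset_induct)
  case (step t)
  have "(\<Sum>u\<in>tamari_upset t. G u) = G t + (\<Sum>u\<in>tamari_upset t - {t}. G u)"
    using finite_tamari_upset[OF step(1)] by (subst sum.remove[of _ t]) auto
  also have "(\<Sum>u\<in>tamari_upset t - {t}. G u) = 0"
    using step by (intro sum.neutral) auto
  finally show ?case using sums_zero[OF step(1)] by simp
qed

section \<open>Cuts and rotations\<close>

lemma rtranclp_rot_Node_child:
  "rot\<^sup>*\<^sup>* a b \<Longrightarrow> rot\<^sup>*\<^sup>* (Node (xs @ a # ys)) (Node (xs @ b # ys))"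
proof (induction rule: rtranclp_induct)
  case (step y z)
  then show ?case using rot.inside[of y z xs ys] by (meson rtranclp.rtrancl_into_rtrancl)
qed simp

lemma rtranclp_rot_mk_child:
  assumes "rot\<^sup>*\<^sup>* a b"
  shows "rot\<^sup>*\<^sup>* (mk (xs @ a # ys)) (mk (xs @ b # ys))"
proof (cases "xs = [] \<and> ys = []")
  case True
  then show ?thesis using assms by simp
next
  case False
  then have "mk (xs @ a # ys) = Node (xs @ a # ys)" "mk (xs @ b # ys) = Node (xs @ b # ys)"
    by (auto simp: mk_eq)
  then show ?thesis using rtranclp_rot_Node_child[OF assms] by simp
qed

lemma lcut_rot_here:
  assumes "cs \<noteq> []" "ds \<noteq> []"
  shows "rot\<^sup>*\<^sup>* (lcut j (Node (cs @ [Node (d1 # ds)]))) (lcut j (Node (Node (cs @ [d1]) # ds)))"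
proof -
  let ?N = "nleaves_list cs"
  consider "j < ?N" | "?N \<le> j" "j < ?N + nleaves d1" | "?N + nleaves d1 \<le> j"
    by linarith
  then show ?thesis
  proof cases
    case 1
    then show ?thesis by (simp add: lcs_append)
  next
    case 2
    then have "j - ?N < nleaves d1" by linarith
    with 2 show ?thesis by (simp add: lcs_append)
  next
    case 3
    let ?ds = "lcs (j - ?N - nleaves d1) ds"
    have ne: "?ds \<noteq> []" using assms lcs_nonempty by blast
    have "\<not> j - ?N < nleaves d1" using 3 by linarith
    with 3 have "lcut j (Node (cs @ [Node (d1 # ds)])) = Node (cs @ [Node (d1 # ?ds)])"
      "lcut j (Node (Node (cs @ [d1]) # ds)) = Node (Node (cs @ [d1]) # ?ds)"
      using assms ne by (simp_all add: lcs_append mk_eq diff_diff_add lcs_beyond)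
    then show ?thesis using rot.here[OF assms(1) ne, of d1] by simp
  qed
qed

lemma rcut_rot_here:
  assumes "cs \<noteq> []" "ds \<noteq> []"
  shows "rot\<^sup>*\<^sup>* (rcut j (Node (cs @ [Node (d1 # ds)]))) (rcut j (Node (Node (cs @ [d1]) # ds)))"
proof -
  let ?N = "nleaves_list cs"
  consider "j < ?N" | "?N \<le> j" "j < ?N + nleaves d1"
    | "?N + nleaves d1 \<le> j" "j < ?N + nleaves d1 + nleaves_list ds"
    | "?N + nleaves d1 + nleaves_list ds \<le> j"
    by linarith
  then show ?thesis
  proof cases
    case 1
    let ?cs = "rcs j cs"
    have ne: "?cs \<noteq> []" using 1 rcs_nonempty by blast
    have "rcut j (Node (cs @ [Node (d1 # ds)])) = Node (?cs @ [Node (d1 # ds)])"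
      "rcut j (Node (Node (cs @ [d1]) # ds)) = Node (Node (?cs @ [d1]) # ds)"
      using 1 assms ne by (simp_all add: rcs_append mk_eq)
    then show ?thesis using rot.here[OF ne assms(2), of d1] by simp
  next
    case 2
    then have "j - ?N < nleaves d1" by linarith
    with 2 show ?thesis by (simp add: rcs_append)
  next
    case 3
    then have "\<not> j - ?N < nleaves d1" "j - ?N < nleaves d1 + nleaves_list ds" by linarith+
    with 3 show ?thesis by (simp add: rcs_append diff_diff_add)
  next
    case 4
    then have "\<not> j - ?N < nleaves d1" "\<not> j - ?N < nleaves d1 + nleaves_list ds" by linarith+
    with 4 show ?thesis by (simp add: rcs_append rcs_beyond)
  qed
qed

lemma rot_cuts:
  "rot s t \<Longrightarrow> rot\<^sup>*\<^sup>* (lcut j s) (lcut j t) \<and> rot\<^sup>*\<^sup>* (rcut j s) (rcut j t)"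
proof (induction arbitrary: j rule: rot.induct)
  case (here cs ds d1)
  then show ?case using lcut_rot_here rcut_rot_here by blast
next
  case (inside c c' xs ys)
  have nl: "nleaves c = nleaves c'" using inside rot_nleaves by blast
  have cc: "rot\<^sup>*\<^sup>* c c'" using inside(1) by blast
  let ?X = "nleaves_list xs"
  consider "j < ?X" | "?X \<le> j" "j < ?X + nleaves c" | "?X + nleaves c \<le> j"
    by linarith
  then show ?case
  proof cases
    case 1
    then show ?thesis
      using rtranclp_rot_mk_child[OF cc, of "rcs j xs" ys] by (simp add: lcs_append rcs_append)
  next
    case 2
    then have "j - ?X < nleaves c" by linarith
    then show ?thesis
      using 2 nl inside(2)[of "j - ?X"]
        rtranclp_rot_mk_child[of "lcut (j - ?X) c" "lcut (j - ?X) c'" xs "[]"]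
        rtranclp_rot_mk_child[of "rcut (j - ?X) c" "rcut (j - ?X) c'" "[]" ys]
      by (simp add: lcs_append rcs_append)
  next
    case 3
    then have "\<not> j - ?X < nleaves c" by linarith
    with 3 show ?thesis
      using nl rtranclp_rot_mk_child[OF cc, of xs "lcs (j - ?X - nleaves c) ys"]
      by (simp add: lcs_append rcs_append diff_diff_add)
  qed
qed

lemma rtranclp_rot_cuts:
  "rot\<^sup>*\<^sup>* s t \<Longrightarrow> rot\<^sup>*\<^sup>* (lcut j s) (lcut j t) \<and> rot\<^sup>*\<^sup>* (rcut j s) (rcut j t)"
proof (induction rule: rtranclp_induct)
  case (step y z)
  then show ?case using rot_cuts[of y z j] by (meson rtranclp_trans)
qed simp

lemma rtranclp_rot_allowable: "rot\<^sup>*\<^sup>* s t \<Longrightarrow> allowable j s = allowable j t"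
  unfolding allowable_def using rtranclp_rot_cuts[of s t j] rtranclp_rot_ideg by metis

section \<open>Grafting\<close>

lemma valid_ptree_induct [consumes 1, case_names Leaf Node]:
  assumes "valid t"
    and "P Leaf"
    and "\<And>c cs. valid c \<Longrightarrow> cs \<noteq> [] \<Longrightarrow> \<forall>d\<in>set cs. valid d \<Longrightarrow> P c \<Longrightarrow> P (Node (c # cs))"
  shows "P t"
  using assms(1)
proof (induction t)
  case (Node cs)
  then obtain c cs' where "cs = c # cs'" "cs' \<noteq> []" by (cases cs) (auto simp: Suc_le_eq)
  with Node assms(3) show ?case by auto
qed (rule assms(2))

lemma nleaves_graft: "valid y \<Longrightarrow> nleaves (graft x y) = nleaves x + nleaves y - 1"
  by (induction y rule: valid_ptree_induct) (auto dest: nleaves_pos)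

lemma ideg_graft: "valid y \<Longrightarrow> ideg (graft x y) = ideg x + ideg y"
  by (induction y rule: valid_ptree_induct) auto

lemma graft_Leaf_left: "valid y \<Longrightarrow> graft Leaf y = y"
  by (induction y rule: valid_ptree_induct) auto

lemma rot_graft_left:
  assumes "rot x x'" "valid y"
  shows "rot (graft x y) (graft x' y)"
  using assms(2)
  by (induction y rule: valid_ptree_induct) (auto simp: assms(1) intro: rot.inside[of _ _ "[]", simplified])

lemma rot_graft_right: "rot y y' \<Longrightarrow> rot (graft x y) (graft x y')"
proof (induction rule: rot.induct)
  case (here cs ds d1)
  then obtain c cs' where "cs = c # cs'" by (cases cs) auto
  then show ?case using rot.here[of "graft x c # cs'" ds d1] here by simp
next
  case (inside c c' xs ys)
  show ?case
  proof (cases xs)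
    case Nil
    then show ?thesis using inside rot.inside[of _ _ "[]" ys] by simp
  next
    case (Cons a xs')
    then show ?thesis using inside rot.inside[of c c' "graft x a # xs'" ys] by simp
  qed
qed

lemma rtranclp_rot_graft_left: "rot\<^sup>*\<^sup>* x x' \<Longrightarrow> valid y \<Longrightarrow> rot\<^sup>*\<^sup>* (graft x y) (graft x' y)"
  by (induction rule: rtranclp_induct) (auto dest: rot_graft_left intro: rtranclp.rtrancl_into_rtrancl)

lemma rtranclp_rot_graft_right: "rot\<^sup>*\<^sup>* y y' \<Longrightarrow> rot\<^sup>*\<^sup>* (graft x y) (graft x y')"
  by (induction rule: rtranclp_induct) (auto dest: rot_graft_right intro: rtranclp.rtrancl_into_rtrancl)

text \<open>Rotating repeatedly along the left branch of \<open>b\<close> lifts a graft out of the last child.\<close>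

lemma rtranclp_rot_Node_snoc_graft:
  assumes "as \<noteq> []" "valid b"
  shows "rot\<^sup>*\<^sup>* (Node (as @ [graft a b])) (graft (Node (as @ [a])) b)"
  using assms(2)
proof (induction b rule: valid_ptree_induct)
  case (Node b1 bs)
  have "rot (Node (as @ [Node (graft a b1 # bs)])) (Node (Node (as @ [graft a b1]) # bs))"
    using rot.here[OF assms(1) Node(2)] .
  moreover have "rot\<^sup>*\<^sup>* (Node (Node (as @ [graft a b1]) # bs)) (Node (graft (Node (as @ [a])) b1 # bs))"
    using rtranclp_rot_Node_child[of _ _ "[]" bs] Node by simp
  ultimately show ?case by (simp add: converse_rtranclp_into_rtranclp)
qed simp

lemma cuts_last_leaf: "valid x \<Longrightarrow> lcut (deg x) x = x \<and> rcut (deg x) x = Leaf"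
proof (induction x)
  case (Node cs)
  then obtain pre c where cs: "cs = pre @ [c]" by (metis rev_exhaust valid.simps(2) list.size(3) not_numeral_le_zero)
  have "valid c" using Node cs by auto
  then have "1 \<le> nleaves c" by (rule nleaves_pos)
  then obtain k where k: "nleaves c = Suc k" by (cases "nleaves c") auto
  have "lcut k c = c" "rcut k c = Leaf" using Node.IH[of c] cs \<open>valid c\<close> k by (auto simp: deg_def)
  moreover have "deg (Node cs) = nleaves_list pre + k" using cs k by (simp add: deg_def)
  moreover have "mk cs = Node cs" "mk [Leaf] = Leaf" using Node by (auto simp: mk_eq)
  ultimately show ?case using cs k by (simp add: lcs_append rcs_append)
qed (simp add: deg_def)

lemma cuts_graft:
  assumes "valid x" "valid y"
  shows "lcut (deg x) (graft x y) = x \<and> rcut (deg x) (graft x y) = y"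
  using assms(2)
proof (induction y rule: valid_ptree_induct)
  case Leaf
  then show ?case by (simp add: cuts_last_leaf assms(1))
next
  case (Node y1 ys)
  have "deg x < nleaves (graft x y1)"
    using Node nleaves_graft nleaves_pos[OF assms(1)] nleaves_pos[of y1] by (simp add: deg_def)
  with Node show ?case by (simp add: mk_eq)
qed

section \<open>Allowable splittings\<close>

lemma lcut_rcut_Node:
  assumes "valid (Node cs)" "i < nleaves (Node cs)"
  obtains pre c post i' where "cs = pre @ c # post" "i' < nleaves c"
    "lcut i (Node cs) = mk (pre @ [lcut i' c])" "rcut i (Node cs) = mk (rcut i' c # post)"
    "pre \<noteq> [] \<or> post \<noteq> []" "valid c"
proof -
  have split_at: "\<exists>pre c post i'. cs = pre @ c # post \<and> i' < nleaves c
      \<and> lcs i cs = pre @ [lcut i' c] \<and> rcs i cs = rcut i' c # post"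
    if "i < nleaves_list cs" for i
    using that
  proof (induction cs arbitrary: i)
    case (Cons a cs)
    show ?case
    proof (cases "i < nleaves a")
      case True
      then show ?thesis by (intro exI[of _ "[]"] exI[of _ a] exI[of _ cs] exI[of _ i]) auto
    next
      case False
      with Cons.prems have "i - nleaves a < nleaves_list cs" by auto
      from Cons.IH[OF this] obtain pre c post i' where "cs = pre @ c # post" "i' < nleaves c"
        "lcs (i - nleaves a) cs = pre @ [lcut i' c]" "rcs (i - nleaves a) cs = rcut i' c # post"
        by blast
      with False show ?thesis
        by (intro exI[of _ "a # pre"] exI[of _ c] exI[of _ post] exI[of _ i']) auto
    qed
  qed simp
  from assms(2) have "i < nleaves_list cs" by simp
  from split_at[OF this] obtain pre c post i' where h: "cs = pre @ c # post" "i' < nleaves c"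
    "lcs i cs = pre @ [lcut i' c]" "rcs i cs = rcut i' c # post"
    by blast
  moreover have "pre \<noteq> [] \<or> post \<noteq> []" "valid c" using assms(1) h by auto
  ultimately show ?thesis using that by simp
qed

lemma ideg_le_ideg_cuts: "valid t \<Longrightarrow> i < nleaves t \<Longrightarrow> ideg t \<le> ideg (lcut i t) + ideg (rcut i t)"
proof (induction t arbitrary: i)
  case (Node cs)
  from Node.prems obtain pre c post i' where h: "cs = pre @ c # post" "i' < nleaves c"
    "lcut i (Node cs) = mk (pre @ [lcut i' c])" "rcut i (Node cs) = mk (rcut i' c # post)"
    "pre \<noteq> [] \<or> post \<noteq> []" "valid c"
    by (rule lcut_rcut_Node)
  have "ideg c \<le> ideg (lcut i' c) + ideg (rcut i' c)" using Node.IH[of c i'] h by auto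
  then show ?case using h by (auto simp: mk_eq)
qed simp

text \<open>Allowability forces the splitting path to run, at every node, through the first or the last
  child; undoing the corresponding rotations recovers \<open>s\<close> from the graft of its two halves.\<close>

lemma allowable_rtranclp_rot_graft_cuts:
  "valid s \<Longrightarrow> i < nleaves s \<Longrightarrow> allowable i s \<Longrightarrow> rot\<^sup>*\<^sup>* s (graft (lcut i s) (rcut i s))"
proof (induction s arbitrary: i)
  case (Node cs)
  from Node.prems(1,2) obtain pre c post i' where h: "cs = pre @ c # post" "i' < nleaves c"
    "lcut i (Node cs) = mk (pre @ [lcut i' c])" "rcut i (Node cs) = mk (rcut i' c # post)"
    "pre \<noteq> [] \<or> post \<noteq> []" "valid c"
    by (rule lcut_rcut_Node)
  have "ideg c \<le> ideg (lcut i' c) + ideg (rcut i' c)" using ideg_le_ideg_cuts h by auto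
  with Node.prems h have "allowable i' c" and one_side: "pre = [] \<or> post = []"
    unfolding allowable_def by (auto simp: mk_eq split: if_splits)
  then have IH: "rot\<^sup>*\<^sup>* c (graft (lcut i' c) (rcut i' c))" using Node.IH[of c i'] h by auto
  show ?case
  proof (cases "pre = []")
    case True
    with h have "graft (lcut i (Node cs)) (rcut i (Node cs)) = Node (graft (lcut i' c) (rcut i' c) # post)"
      by (simp add: mk_eq)
    then show ?thesis using rtranclp_rot_Node_child[OF IH, of "[]" post] h True by simp
  next
    case False
    with one_side h have "graft (lcut i (Node cs)) (rcut i (Node cs)) = graft (Node (pre @ [lcut i' c])) (rcut i' c)"
      by (simp add: mk_eq)
    moreover have "rot\<^sup>*\<^sup>* (Node (pre @ [c])) (Node (pre @ [graft (lcut i' c) (rcut i' c)]))"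
      using rtranclp_rot_Node_child[OF IH, of pre "[]"] by simp
    moreover have "valid (rcut i' c)" using valid_rcut h by auto
    ultimately show ?thesis
      using rtranclp_rot_Node_snoc_graft[OF False] one_side h False by (metis rtranclp_trans)
  qed
qed simp

theorem tamari_le_graft_iff:
  assumes "valid s" "valid x" "valid y"
  shows "tamari_le s (graft x y) \<longleftrightarrow>
    deg x \<le> deg s \<and> allowable (deg x) s \<and> tamari_le (lcut (deg x) s) x \<and> tamari_le (rcut (deg x) s) y"
    (is "_ \<longleftrightarrow> ?rhs")
proof
  assume le: "tamari_le s (graft x y)"
  then have rot: "rot\<^sup>*\<^sup>* s (graft x y)" unfolding tamari_le_def .
  have cuts: "lcut (deg x) (graft x y) = x" "rcut (deg x) (graft x y) = y"
    using cuts_graft[OF assms(2,3)] by auto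
  have "deg x \<le> deg s"
    using tamari_le_nleaves[OF le] nleaves_graft[OF assms(3), of x] nleaves_pos[OF assms(3)]
    by (simp add: deg_def)
  moreover have "allowable (deg x) (graft x y)"
    unfolding allowable_def cuts using ideg_graft[OF assms(3)] by simp
  ultimately show ?rhs
    using rtranclp_rot_allowable[OF rot] rtranclp_rot_cuts[OF rot, of "deg x"] cuts
    unfolding tamari_le_def by auto
next
  assume h: ?rhs
  let ?j = "deg x"
  have lt: "?j < nleaves s" using h le_deg_imp_less_nleaves[OF assms(1)] by simp
  have "rot\<^sup>*\<^sup>* s (graft (lcut ?j s) (rcut ?j s))"
    using allowable_rtranclp_rot_graft_cuts[OF assms(1) lt] h by simp
  also have "rot\<^sup>*\<^sup>* \<dots> (graft x (rcut ?j s))"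
    using rtranclp_rot_graft_left valid_rcut(1)[OF assms(1) lt] h unfolding tamari_le_def by simp
  also have "rot\<^sup>*\<^sup>* \<dots> (graft x y)"
    using rtranclp_rot_graft_right h unfolding tamari_le_def by simp
  finally show "tamari_le s (graft x y)" unfolding tamari_le_def .
qed

lemma nleaves_tamari_upper_lcut:
  "valid s \<Longrightarrow> j \<le> deg s \<Longrightarrow> tamari_le (lcut j s) x \<Longrightarrow> nleaves x = j + 1"
  using tamari_le_nleaves nleaves_lcut(1) le_deg_imp_less_nleaves by fastforce

lemma valid_cuts_le_deg: "valid s \<Longrightarrow> j \<le> deg s \<Longrightarrow> valid (lcut j s) \<and> valid (rcut j s)"
  using valid_lcut(1) valid_rcut(1) le_deg_imp_less_nleaves by blast

section \<open>The coproduct of the monomial basis\<close>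

definition graft_decomps :: "ptree \<Rightarrow> (ptree \<times> ptree) set" where
  "graft_decomps t = {(x, y). valid x \<and> valid y \<and> graft x y = t}"

lemma finite_graft_decomps: "finite (graft_decomps t)"
proof -
  let ?B = "{x. valid x \<and> nleaves x \<le> nleaves t}"
  have "graft_decomps t \<subseteq> ?B \<times> ?B"
  proof
    fix q assume "q \<in> graft_decomps t"
    then obtain x y where q: "q = (x, y)" "valid x" "valid y" "graft x y = t"
      by (auto simp: graft_decomps_def)
    then show "q \<in> ?B \<times> ?B"
      using nleaves_graft[OF q(3), of x] nleaves_pos[OF q(2)] nleaves_pos[OF q(3)] by auto
  qed
  then show ?thesis using finite_valid_nleaves_le by (metis finite_SigmaI finite_subset)
qed

lemma graft_decomps_tamari_upset:
  assumes "valid s"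
  shows "\<Union> (graft_decomps ` tamari_upset s) =
    (\<Union>j\<in>{j. j \<le> deg s \<and> allowable j s}. tamari_upset (lcut j s) \<times> tamari_upset (rcut j s))"
proof (intro set_eqI iffI)
  fix q assume "q \<in> \<Union> (graft_decomps ` tamari_upset s)"
  then show "q \<in> (\<Union>j\<in>{j. j \<le> deg s \<and> allowable j s}. tamari_upset (lcut j s) \<times> tamari_upset (rcut j s))"
    using tamari_le_graft_iff[OF assms] by (auto simp: graft_decomps_def)
next
  fix q assume "q \<in> (\<Union>j\<in>{j. j \<le> deg s \<and> allowable j s}. tamari_upset (lcut j s) \<times> tamari_upset (rcut j s))"
  then obtain j x y where q: "q = (x, y)" "j \<le> deg s" "allowable j s"
    "tamari_le (lcut j s) x" "tamari_le (rcut j s) y"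
    by auto
  have "valid x" "valid y" using q valid_cuts_le_deg[OF assms] tamari_le_valid by blast+
  moreover have "deg x = j" using nleaves_tamari_upper_lcut[OF assms q(2,4)] by (simp add: deg_def)
  ultimately show "q \<in> \<Union> (graft_decomps ` tamari_upset s)"
    using tamari_le_graft_iff[OF assms] q by (auto simp: graft_decomps_def)
qed

lemma GD_bounds: "i \<in> GD t \<Longrightarrow> 1 \<le> i \<and> i + 1 < nleaves t"
  by (auto simp: GD_def deg_def)

lemma nleaves_lcut_GD: "i \<in> GD t \<Longrightarrow> nleaves (lcut i t) = i + 1"
  using GD_bounds nleaves_lcut(1) by (simp add: Suc_lessD)

lemma graft_decomps_eq:
  assumes "valid t"
  shows "graft_decomps t = insert (t, Leaf) (insert (Leaf, t) ((\<lambda>i. (lcut i t, rcut i t)) ` GD t))"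
proof (intro set_eqI iffI)
  fix q assume "q \<in> graft_decomps t"
  then obtain x y where q: "q = (x, y)" "valid x" "valid y" "graft x y = t"
    by (auto simp: graft_decomps_def)
  consider "x = Leaf" | "y = Leaf" | "2 \<le> nleaves x" "2 \<le> nleaves y"
    using q valid_nleaves_eq_1 nleaves_pos by (metis Suc_1 Suc_leI le_neq_implies_less)
  then show "q \<in> insert (t, Leaf) (insert (Leaf, t) ((\<lambda>i. (lcut i t, rcut i t)) ` GD t))"
  proof cases
    case 3
    then have "deg x \<in> GD t"
      using q nleaves_graft[OF q(3), of x] unfolding GD_def deg_def by auto
    then have "q \<in> (\<lambda>i. (lcut i t, rcut i t)) ` GD t"
      using cuts_graft[OF q(2,3)] q by (intro rev_image_eqI[of "deg x"]) auto
    then show ?thesis by blast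
  qed (use q graft_Leaf_left in auto)
next
  fix q assume "q \<in> insert (t, Leaf) (insert (Leaf, t) ((\<lambda>i. (lcut i t, rcut i t)) ` GD t))"
  then show "q \<in> graft_decomps t"
    using assms graft_Leaf_left cuts_graft unfolding GD_def graft_decomps_def by auto
qed

lemma sum_graft_decomps:
  assumes "valid t" "0 < deg t"
  shows "(\<Sum>q\<in>graft_decomps t. f q) = f (t, Leaf) + f (Leaf, t) + (\<Sum>i\<in>GD t. f (lcut i t, rcut i t))"
proof -
  have "t \<noteq> Leaf" using assms(2) by (auto simp: deg_def)
  then have "(t, Leaf) \<notin> insert (Leaf, t) ((\<lambda>i. (lcut i t, rcut i t)) ` GD t)"
    "(Leaf, t) \<notin> (\<lambda>i. (lcut i t, rcut i t)) ` GD t"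
    using nleaves_lcut_GD GD_bounds by fastforce+
  moreover have "inj_on (\<lambda>i. (lcut i t, rcut i t)) (GD t)"
    by (rule inj_onI) (metis add_right_cancel nleaves_lcut_GD prod.inject)
  moreover have "finite (GD t)" unfolding GD_def by simp
  ultimately show ?thesis
    unfolding graft_decomps_eq[OF assms(1)] by (simp add: sum.reindex add.assoc)
qed

locale monomial_basis =
  fixes M :: "ptree \<Rightarrow> ptree \<Rightarrow> 'a::comm_ring_1"
  assumes Fb_eq_sum_M: "\<And>s u. valid s \<Longrightarrow> Fb s u = (\<Sum>t\<in>tamari_upset s. M t u)"
begin

lemma M_Leaf: "M Leaf = Fb Leaf"
  using Fb_eq_sum_M[of Leaf] by (simp add: tamari_upset_Leaf fun_eq_iff)

lemma M_eq_0_unless_tamari_le: "valid t \<Longrightarrow> \<not> tamari_le t u \<Longrightarrow> M t u = 0"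
proof (induction rule: tamari_upset_induct)
  case (step t)
  have "Fb t u = M t u + (\<Sum>v\<in>tamari_upset t - {t}. M v u)"
    unfolding Fb_eq_sum_M[OF step(1)] using finite_tamari_upset[OF step(1)]
    by (subst sum.remove[of _ t]) auto
  also have "(\<Sum>v\<in>tamari_upset t - {t}. M v u) = 0"
    using step tamari_le_trans by (intro sum.neutral) blast
  finally have "Fb t u = M t u" by simp
  moreover have "u \<noteq> t" using step(3) by auto
  ultimately show ?case by (simp add: Fb_def)
qed

lemma sum_tamari_upset_Delta_M:
  assumes "valid s"
  shows "(\<Sum>t\<in>tamari_upset s. Delta (M t) p) = DeltaF s p"
proof -
  let ?U = "tamari_upset s"
  have "Delta (M t) p = (\<Sum>u\<in>?U. M t u * DeltaF u p)" if "t \<in> ?U" for t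
  proof -
    have "{u. M t u \<noteq> 0} \<subseteq> ?U"
      using M_eq_0_unless_tamari_le tamari_le_valid[OF assms] that tamari_le_trans by fastforce
    then show ?thesis
      unfolding Delta_def by (rule sum.mono_neutral_left[OF finite_tamari_upset[OF assms]]) auto
  qed
  then have "(\<Sum>t\<in>?U. Delta (M t) p) = (\<Sum>t\<in>?U. \<Sum>u\<in>?U. M t u * DeltaF u p)"
    by simp
  also have "\<dots> = (\<Sum>u\<in>?U. (\<Sum>t\<in>?U. M t u) * DeltaF u p)"
    by (subst sum.swap) (simp add: sum_distrib_right)
  also have "\<dots> = (\<Sum>u\<in>?U. Fb s u * DeltaF u p)"
    using Fb_eq_sum_M[OF assms] by simp
  also have "\<dots> = (\<Sum>u\<in>?U. if s = u then DeltaF u p else 0)"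
    by (intro sum.cong) (auto simp: Fb_def)
  also have "\<dots> = DeltaF s p"
    using finite_tamari_upset[OF assms] by (simp add: sum.delta)
  finally show ?thesis .
qed

lemma sum_tamari_upset_graft_decomps:
  assumes "valid s"
  shows "(\<Sum>t\<in>tamari_upset s. \<Sum>(x, y)\<in>graft_decomps t. M x a * M y b) = DeltaF s (a, b)"
proof -
  let ?J = "{j. j \<le> deg s \<and> allowable j s}"
  let ?P = "\<lambda>j. tamari_upset (lcut j s) \<times> tamari_upset (rcut j s)"
  let ?f = "\<lambda>(x, y). M x a * M y b"
  have valid_cuts: "valid (lcut j s)" "valid (rcut j s)" if "j \<in> ?J" for j
    using that valid_cuts_le_deg[OF assms] by auto
  have nleaves_upper: "nleaves x = j + 1" if "j \<in> ?J" "tamari_le (lcut j s) x" for j x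
    using that nleaves_tamari_upper_lcut[OF assms] by auto
  have "(\<Sum>t\<in>tamari_upset s. sum ?f (graft_decomps t)) = sum ?f (\<Union> (graft_decomps ` tamari_upset s))"
    using finite_tamari_upset[OF assms] finite_graft_decomps
    by (subst sum.UNION_disjoint) (auto simp: graft_decomps_def)
  also have "\<Union> (graft_decomps ` tamari_upset s) = \<Union> (?P ` ?J)"
    using graft_decomps_tamari_upset[OF assms] .
  also have "sum ?f (\<Union> (?P ` ?J)) = (\<Sum>j\<in>?J. sum ?f (?P j))"
  proof (rule sum.UNION_disjoint)
    show "\<forall>j\<in>?J. finite (?P j)" using valid_cuts finite_tamari_upset by blast
    show "\<forall>i\<in>?J. \<forall>j\<in>?J. i \<noteq> j \<longrightarrow> ?P i \<inter> ?P j = {}"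
    proof (intro ballI impI)
      fix i j assume ij: "i \<in> ?J" "j \<in> ?J" "i \<noteq> j"
      have "tamari_upset (lcut i s) \<inter> tamari_upset (lcut j s) = {}"
        using nleaves_upper[OF ij(1)] nleaves_upper[OF ij(2)] ij(3) by (auto simp: disjoint_iff) (metis Suc_inject)
      then show "?P i \<inter> ?P j = {}" by auto
    qed
  qed simp
  also have "\<dots> = (\<Sum>j\<in>?J. Fb (lcut j s) a * Fb (rcut j s) b)"
    using valid_cuts
    by (auto simp: sum.cartesian_product[symmetric] sum_product[symmetric] Fb_eq_sum_M intro!: sum.cong)
  also have "\<dots> = DeltaF s (a, b)"
    unfolding DeltaF_def by (intro sum.cong refl) (auto simp: Fb_def)
  finally show ?thesis .
qed

theorem Delta_M_eq_sum_graft_decomps: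
  assumes "valid t"
  shows "Delta (M t) (a, b) = (\<Sum>(x, y)\<in>graft_decomps t. M x a * M y b)"
proof -
  have "Delta (M t) (a, b) - (\<Sum>(x, y)\<in>graft_decomps t. M x a * M y b) = 0"
    by (rule zero_if_tamari_upset_sums_zero[OF _ assms])
       (simp add: sum_subtractf sum_tamari_upset_Delta_M sum_tamari_upset_graft_decomps)
  then show ?thesis by simp
qed

end

theorem mainTheorem18:
  fixes M :: "ptree \<Rightarrow> ptree \<Rightarrow> 'a::comm_ring_1"
  assumes M_def: "\<And>s u. valid s \<Longrightarrow> Fb s u = (\<Sum>t\<in>{t. tamari_le s t}. M t u)"
    and "valid t" and "0 < deg t"
  shows "Delta_plus (M t) = (\<lambda>p. \<Sum>i\<in>GD t. tensor (M (lcut i t)) (M (rcut i t)) p)"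
proof
  interpret monomial_basis M
    using M_def by unfold_locales
  fix p :: "ptree \<times> ptree"
  obtain a b where p: "p = (a, b)" by fastforce
  have "Delta (M t) (a, b) = M t a * M Leaf b + M Leaf a * M t b + (\<Sum>i\<in>GD t. M (lcut i t) a * M (rcut i t) b)"
    using Delta_M_eq_sum_graft_decomps[OF assms(2)] sum_graft_decomps[OF assms(2,3), of "\<lambda>(x, y). M x a * M y b"]
    by simp
  then show "Delta_plus (M t) p = (\<Sum>i\<in>GD t. tensor (M (lcut i t)) (M (rcut i t)) p)"
    unfolding p Delta_plus_def tensor_def by (simp add: M_Leaf)
qed

end
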